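(* Let $q$ be a power of $2$. Let $b\in\mathbb{F}_q^*$ and $\delta\in\mathbb{F}_{q^2}$ with $b\,\mathrm{Tr}_{q^2/q}(\delta)^2=1$. Then the compositional inverse of $$P(x)=b(x^q+x+\delta)^{q+2}+x$$ over $\mathbb{F}_{q^2}$ is $$P^{-1}(x)=b\left(\left(\mathrm{Tr}_{q^2/q}(\delta)(x^q+x)+\delta^{q+1}\right)^{q/2}+\delta\right)^{q+2}+x.$$
   Context: $\mathrm{Tr}_{q^2/q}(y)=y+y^q$. The compositional inverse of a permutation polynomial $f$ of $\mathbb{F}_{Q}$ is the unique polynomial $f^{-1}$ (modulo $x^Q-x$) with $f(f^{-1}(c))=f^{-1}(f(c))=c$ for all $c\in\mathbb{F}_Q$; in particular the statement includes that $P$ permutes $\mathbb{F}_{q^2}$. *)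

theory Defs
  imports Main
begin

text \<open>Relative trace from F_{q^2} to F_q, where the ambient finite field has q^2 elements.\<close>
definition tr2 :: "nat \<Rightarrow> 'a::field \<Rightarrow> 'a" where
  "tr2 q y = y + y ^ q"

end

theory Submission
  imports Defs "HOL-Computational_Algebra.Primes"
begin

text \<open>Write \<open>Tr y = y^q + y\<close>, \<open>T = Tr \<delta>\<close>, \<open>u = Tr x \<in> GF(q)\<close> and \<open>z = u + \<delta>\<close>, so that
  \<open>P x = b z^(q+2) + x\<close>. As \<open>b \<in> GF(q)\<close> and \<open>Tr z = T\<close>, the trace of \<open>P x\<close> is
  \<open>b T z^(q+1) + u\<close>; with \<open>z^(q+1) = u^2 + u T + \<delta>^(q+1)\<close> and \<open>b T^2 = 1\<close> this gives,
  in characteristic 2, \<open>T Tr (P x) + \<delta>^(q+1) = u^2\<close>. Its \<open>q/2\<close>-th power is \<open>u\<close>, so the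
  candidate inverse evaluates to \<open>b z^(q+2) + P x = x\<close>. A left inverse of a self-map of a
  finite set is a two-sided inverse.\<close>

text \<open>The library's \<open>finite_field_power_card_eq_same\<close> needs the sort \<open>finite_field\<close>,
  which a type of sort \<open>{field, finite}\<close> does not carry.\<close>
lemma power_card_eq_same:
  fixes x :: "'a::{field,finite}"
  shows "x ^ card (UNIV :: 'a set) = x"
proof (cases "x = 0")
  case False
  obtain n where n: "card (UNIV :: 'a set) = Suc n"
    using gr0_implies_Suc[OF finite_UNIV_card_ge_0[OF finite_UNIV]] by blast
  have "(\<Prod>y\<in>UNIV-{0}. x * y) = (\<Prod>y\<in>UNIV-{0}. y)"
    by (rule prod.reindex_bij_witness[of _ "\<lambda>y. y / x" "\<lambda>y. x * y"]) (use False in auto)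
  then have "x ^ n = 1"
    using n by (simp add: prod.distrib card_Diff_singleton)
  then show ?thesis
    using n by simp
qed (simp add: finite_UNIV_card_ge_0)

lemma CHAR_eq_2_if_even_card:
  assumes "even (card (UNIV :: 'a::{field,finite} set))"
  shows "CHAR('a) = 2"
proof -
  have "(-1 :: 'a) = (-1) ^ card (UNIV :: 'a set)"
    by (rule power_card_eq_same[symmetric])
  also have "\<dots> = 1"
    using assms by (rule neg_one_even_power)
  finally have "of_nat 2 = (0 :: 'a)"
    by (simp add: neg_eq_iff_add_eq_0)
  then have "CHAR('a) dvd 2"
    by (simp only: of_nat_eq_0_iff_char_dvd)
  then show ?thesis
    using two_is_prime_nat CHAR_not_1[where 'a = 'a] by (auto simp: prime_nat_iff)
qed

context
  fixes q k :: nat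
  assumes CHAR_2: "CHAR('a::field) = 2"
    and q_eq: "q = 2 ^ k" and k_pos: "k > 0"
    and power_q_squared: "\<And>x::'a. x ^ q\<^sup>2 = x"
begin

lemma frobenius_add: "(x + y :: 'a) ^ q = x ^ q + y ^ q"
  using freshmans_dream'[of q k x y] CHAR_2 q_eq by simp

lemma frobenius_involution: "(x ^ q) ^ q = (x :: 'a)"
  using power_q_squared[of x] by (simp add: power2_eq_square power_mult)

lemma add_self_eq_0 [simp]: "x + x = (0 :: 'a)"
  using uminus_CHAR_2[OF CHAR_2, of x] by (simp add: neg_eq_iff_add_eq_0)

lemma tr2_add: "tr2 q (x + y) = tr2 q x + tr2 q (y :: 'a)"
  unfolding tr2_def frobenius_add by (simp add: algebra_simps)

lemma tr2_power_q: "tr2 q y ^ q = tr2 q (y :: 'a)"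
  unfolding tr2_def frobenius_add frobenius_involution by (simp add: add.commute)

lemma tr2_eq_0_if_fixed: "c ^ q = c \<Longrightarrow> tr2 q (c :: 'a) = 0"
  by (simp add: tr2_def)

lemma tr2_mult_fixed: "c ^ q = c \<Longrightarrow> tr2 q (c * y) = c * tr2 q (y :: 'a)"
  by (simp add: tr2_def power_mult_distrib distrib_left)

lemma tr2_power_q_plus_2: "tr2 q (z ^ (q + 2)) = z ^ (q + 1) * tr2 q (z :: 'a)"
proof -
  have "(z ^ (q + 2)) ^ q = (z ^ q) ^ q * (z ^ 2) ^ q"
    by (simp only: power_add power_mult_distrib)
  also have "\<dots> = z * (z ^ q) ^ 2"
    unfolding frobenius_involution by (simp add: mult.commute flip: power_mult)
  finally have "(z ^ (q + 2)) ^ q = z * (z ^ q) ^ 2" .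
  then show ?thesis
    by (simp add: tr2_def algebra_simps power2_eq_square)
qed

lemma power_q_plus_1_add_fixed:
  assumes "u ^ q = u"
  shows "(u + \<delta>) ^ (q + 1) = u\<^sup>2 + u * tr2 q \<delta> + (\<delta> :: 'a) ^ (q + 1)"
  using assms by (simp add: frobenius_add tr2_def algebra_simps power2_eq_square)

lemma power_q_div_2_of_square:
  assumes "u ^ q = u"
  shows "(u\<^sup>2) ^ (q div 2) = (u :: 'a)"
proof -
  have "2 * (q div 2) = q"
    using q_eq k_pos by simp
  then show ?thesis
    using assms by (simp add: power_mult[symmetric])
qed

lemma compositional_inverse_left:
  fixes b \<delta> x :: 'a
  assumes b_fixed: "b ^ q = b" and b_T: "b * tr2 q \<delta> ^ 2 = 1"
  defines "y \<equiv> b * (x ^ q + x + \<delta>) ^ (q + 2) + x"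
  shows "b * ((tr2 q \<delta> * (y ^ q + y) + \<delta> ^ (q + 1)) ^ (q div 2) + \<delta>) ^ (q + 2) + y = x"
proof -
  define T where "T = tr2 q \<delta>"
  define u where "u = tr2 q x"
  define z where "z = u + \<delta>"
  have u_fixed: "u ^ q = u"
    unfolding u_def by (rule tr2_power_q)
  have y_eq: "y = b * z ^ (q + 2) + x"
    unfolding y_def z_def u_def tr2_def by (simp add: add.commute)
  have "tr2 q z = T"
    unfolding z_def T_def tr2_add tr2_eq_0_if_fixed[OF u_fixed] by simp
  have "y ^ q + y = tr2 q y"
    by (simp add: tr2_def add.commute)
  also have "\<dots> = b * tr2 q (z ^ (q + 2)) + u"
    unfolding y_eq tr2_add tr2_mult_fixed[OF b_fixed] u_def ..
  also have "\<dots> = b * T * z ^ (q + 1) + u"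
    unfolding tr2_power_q_plus_2 \<open>tr2 q z = T\<close> by (simp add: mult_ac)
  finally have "T * (y ^ q + y) + \<delta> ^ (q + 1) = (b * T\<^sup>2) * z ^ (q + 1) + T * u + \<delta> ^ (q + 1)"
    by (simp add: algebra_simps power2_eq_square)
  also have "\<dots> = z ^ (q + 1) + T * u + \<delta> ^ (q + 1)"
    using b_T by (simp add: T_def)
  also have "\<dots> = u\<^sup>2 + (u * T + T * u) + (\<delta> ^ (q + 1) + \<delta> ^ (q + 1))"
    unfolding z_def power_q_plus_1_add_fixed[OF u_fixed] T_def by (simp only: add_ac)
  also have "\<dots> = u\<^sup>2"
    by (simp add: mult.commute)
  finally have "(T * (y ^ q + y) + \<delta> ^ (q + 1)) ^ (q div 2) + \<delta> = z"
    using power_q_div_2_of_square[OF u_fixed] by (simp add: z_def)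
  then show ?thesis
    by (simp add: T_def y_eq flip: add.assoc)
qed

end

lemma finite_left_inverse_is_inverse:
  fixes f g :: "'a::finite \<Rightarrow> 'a"
  assumes "\<And>x. g (f x) = x"
  shows "bij f" and "f (g y) = y"
proof -
  have "inj f"
    by (rule inj_on_inverseI[of _ g]) (use assms in auto)
  then show "bij f"
    by (simp add: bij_def finite_UNIV_inj_surj)
  then obtain x where "y = f x"
    using bij_is_surj surjE by metis
  then show "f (g y) = y"
    by (simp add: assms)
qed

theorem theorem3p6:
  fixes b \<delta> :: "'a::{field, finite}" and q k :: nat
  assumes "k \<ge> 1" and "q = 2 ^ k" and "card (UNIV :: 'a set) = q ^ 2"
    and "b \<noteq> 0" and "b ^ q = b"
    and "b * (tr2 q \<delta>) ^ 2 = 1"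
  defines "P \<equiv> (\<lambda>x::'a. b * (x ^ q + x + \<delta>) ^ (q + 2) + x)"
    and "Pinv \<equiv> (\<lambda>x::'a. b * ((tr2 q \<delta> * (x ^ q + x) + \<delta> ^ (q + 1)) ^ (q div 2) + \<delta>) ^ (q + 2) + x)"
  shows "bij P \<and> (\<forall>c. P (Pinv c) = c) \<and> (\<forall>c. Pinv (P c) = c)"
proof -
  \<comment> \<open>\<open>b \<noteq> 0\<close> is implied by \<open>b T^2 = 1\<close> and not used.\<close>
  have "CHAR('a) = 2"
    using assms(1-3) by (intro CHAR_eq_2_if_even_card) simp
  moreover have "x ^ q\<^sup>2 = x" for x :: 'a
    using power_card_eq_same[of x] assms(3) by simp
  ultimately have "Pinv (P x) = x" for x
    unfolding P_def Pinv_def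
    using compositional_inverse_left[of q k b \<delta> x] assms(1,2,5,6) by simp
  then show ?thesis
    using finite_left_inverse_is_inverse[where f = P and g = Pinv] by blast
qed

end
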